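(* Let $\underline{t}$ and $\underline{u}$ be increment arrays for $n$ agents with $\underline{t}\not\approx\underline{u}$. Then \[\bigcup_{i=1}^{n}\{C(i,\underline{t})\}\;\cap\;\bigcup_{i=1}^{n}\{C(i,\underline{u})\}=\varnothing,\] i.e.\ no coalition is generated both by $\underline{t}$ (from some starting agent) and by $\underline{u}$ (from some starting agent).
   Context: Agent identifiers are $\{1,\ldots,n\}$, arithmetic on identifiers is modulo $n$ with representatives in $\{1,\ldots,n\}$ (a value $0$ is replaced by $n$). An increment array (IA) of size $s$ ($1\le s\le n$) for $n$ agents is a tuple $\underline{t}=\langle t_0,\ldots,t_{s-1}\rangle$ of non-negative integers with $\sum t_i=n-s$. Cumulative increments: $\varphi_1=0$, $\varphi_i=\sum_{k=0}^{i-2}(t_k+1)$ for $2\le i\le s+1$. The coalition generated from $x$ is $C(x,\underline{t})=\{x\}\cup\bigcup_{i=2}^{s}\{(x+\varphi_i)\bmod n\}$ (residues in $\{1,\ldots,n\}$). Two IAs are equivalent, $\underline{t}\approx\underline{u}$, if they have the same size $s$ and $\underline{u}$ is a circular shift of $\underline{t}$: there is $0\le k\le s-1$ with $\langle u_0,\ldots,u_{s-1}\rangle=\langle t_k,\ldots,t_{s-1},t_0,\ldots,t_{k-1}\rangle$. *)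

theory Defs
  imports Main
begin

text \<open>Agents are 1..n; residues modulo n taken in {1..n} (0 replaced by n).\<close>
definition modrep :: "nat \<Rightarrow> nat \<Rightarrow> nat" where
  "modrep n a = (if a mod n = 0 then n else a mod n)"

definition is_IA :: "nat \<Rightarrow> nat list \<Rightarrow> bool" where
  "is_IA n t \<longleftrightarrow> 1 \<le> length t \<and> length t \<le> n \<and> sum_list t = n - length t"

definition phi :: "nat list \<Rightarrow> nat \<Rightarrow> nat" where
  "phi t i = (\<Sum>k<i - 1. t ! k + 1)"

definition coalition :: "nat \<Rightarrow> nat \<Rightarrow> nat list \<Rightarrow> nat set" where
  "coalition n x t = {x} \<union> {modrep n (x + phi t i) | i. 2 \<le> i \<and> i \<le> length t}"

definition IA_equiv :: "nat list \<Rightarrow> nat list \<Rightarrow> bool" where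
  "IA_equiv t u \<longleftrightarrow> length t = length u \<and>
     (\<exists>k. k \<le> length t - 1 \<and> u = drop k t @ take k t)"

end

theory Submission
  imports Defs "HOL-Number_Theory.Cong"
begin

(* Shifted by the starting agent x, the coalition C(x,t) is the set of residues of
  x + phi_i modulo n. The cumulative increments lie in [0, n), so this set determines t once x is
  fixed: the increments are read off as the gaps between consecutive residues. If C(x,t) = C(y,u),
  then y is a member x + phi_(k+1) of C(x,t). But C(x,t) is also generated by the k-th rotation
  of t from that member, so by uniqueness u is the k-th rotation of t. *)

(* offset t j is the paper's phi_(j+1). *)

definition offset :: "nat list \<Rightarrow> nat \<Rightarrow> nat" where
  "offset t j = sum_list (take j t) + j"

definition offsets :: "nat list \<Rightarrow> nat set" where
  "offsets t = offset t ` {..<length t}"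

definition residues :: "nat \<Rightarrow> nat \<Rightarrow> nat list \<Rightarrow> nat set" where
  "residues n x t = (\<lambda>p. (x + p) mod n) ` offsets t"

lemma sum_list_rotate: "sum_list (rotate k t) = (sum_list t :: 'a::comm_monoid_add)"
proof -
  have "sum_list t = sum_list (take (k mod length t) t) + sum_list (drop (k mod length t) t)"
    by (simp flip: sum_list_append)
  then show ?thesis
    by (simp add: rotate_drop_take add.commute)
qed

lemma offset_0 [simp]: "offset t 0 = 0"
  by (simp add: offset_def)

lemma offset_Suc: "j < length t \<Longrightarrow> offset t (Suc j) = offset t j + Suc (t ! j)"
  by (simp add: offset_def take_Suc_conv_app_nth)

lemma offset_Cons_Suc: "offset (a # t) (Suc j) = Suc a + offset t j"
  by (simp add: offset_def)

lemma phi_Suc: "j \<le> length t \<Longrightarrow> phi t (Suc j) = offset t j"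
  by (induction j) (auto simp: phi_def offset_def take_Suc_conv_app_nth)

lemma offset_le_total: "offset t j \<le> sum_list t + j"
proof -
  have "sum_list (take j t) \<le> sum_list (take j t) + sum_list (drop j t)" by simp
  then show ?thesis
    by (simp add: offset_def flip: sum_list_append)
qed

lemma offset_length: "offset t (length t) = sum_list t + length t"
  by (simp add: offset_def)

lemma offset_image_Cons:
  "offset (a # t) ` {..Suc (length t)} = insert 0 ((+) (Suc a) ` offset t ` {..length t})"
  by (simp add: atMost_Suc_eq_insert_0 image_image offset_Cons_Suc)

lemma zero_in_offset_image: "0 \<in> offset t ` {..length t}"
  by (metis atMost_iff image_eqI le0 offset_0)

lemma offset_image_eq_0_iff: "offset t ` {..length t} = {0} \<longleftrightarrow> t = []"
  by (cases t) (auto simp: offset_image_Cons)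

(* The smallest non-zero element of the closed set of offsets of a # t is Suc a, and removing 0
  leaves the offsets of t shifted by Suc a. *)

lemma offset_image_atMost_inj:
  "offset t ` {..length t} = offset u ` {..length u} \<Longrightarrow> t = u"
proof (induction t arbitrary: u)
  case Nil
  then show ?case
    using offset_image_eq_0_iff by (metis list.size(3) atMost_0 image_insert image_empty offset_0)
next
  case (Cons a t)
  then obtain b u' where u: "u = b # u'"
    using offset_image_eq_0_iff by (metis list.exhaust list.distinct(1))
  have eq: "insert 0 ((+) (Suc a) ` offset t ` {..length t})
          = insert 0 ((+) (Suc b) ` offset u' ` {..length u'})"
    using Cons.prems by (simp add: u offset_image_Cons)
  have "Suc a \<in> insert 0 ((+) (Suc b) ` offset u' ` {..length u'})"
    using eq zero_in_offset_image[of t] by (metis add_0_right image_eqI insertI2)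
  moreover have "Suc b \<in> insert 0 ((+) (Suc a) ` offset t ` {..length t})"
    using eq zero_in_offset_image[of u'] by (metis add_0_right image_eqI insertI2)
  ultimately have ab: "a = b" by auto
  have "0 \<notin> (+) (Suc a) ` S" for S :: "nat set"
    by auto
  then have "(+) (Suc a) ` offset t ` {..length t} = (+) (Suc a) ` offset u' ` {..length u'}"
    using eq unfolding ab by (metis insert_ident)
  then have "offset t ` {..length t} = offset u' ` {..length u'}"
    by (rule inj_image_eq_iff[OF inj_on_add, THEN iffD1])
  then show ?case
    using Cons.IH ab u by simp
qed

lemma offsets_inj:
  assumes "offsets t = offsets u" and "sum_list t + length t = sum_list u + length u"
  shows "t = u"
proof (rule offset_image_atMost_inj)
  have "offset s ` {..length s} = insert (sum_list s + length s) (offsets s)" for s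
    by (simp add: offsets_def lessThan_Suc_atMost [symmetric] lessThan_Suc offset_length)
  then show "offset t ` {..length t} = offset u ` {..length u}"
    using assms by simp
qed

lemma offsets_less: "p \<in> offsets t \<Longrightarrow> p < sum_list t + length t"
  unfolding offsets_def by (auto intro: le_less_trans[OF offset_le_total])

lemma zero_in_offsets: "t \<noteq> [] \<Longrightarrow> 0 \<in> offsets t"
  by (force simp: offsets_def)

lemma residues_mod: "x mod n = y mod n \<Longrightarrow> residues n x t = residues n y t"
  unfolding residues_def by (metis mod_add_left_eq)

lemma residues_inj:
  assumes "sum_list t + length t = n" and "sum_list u + length u = n"
    and "residues n x t = residues n x u"
  shows "t = u"
proof -
  have "inj_on (\<lambda>p. (x + p) mod n) {..<n}"
    by (rule inj_onI) (simp add: cong_add_lcancel_nat cong_less_modulus_unique_nat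
        flip: cong_def)
  moreover have "offsets t \<subseteq> {..<n}" "offsets u \<subseteq> {..<n}"
    using assms(1,2) by (auto dest: offsets_less)
  ultimately have "offsets t = offsets u"
    using assms(3) unfolding residues_def by (simp add: inj_on_image_eq_iff)
  then show ?thesis
    using assms(1,2) offsets_inj by simp
qed

lemma residues_rotate1:
  assumes "sum_list (a # t) + length (a # t) = n"
  shows "residues n (x + Suc a) (t @ [a]) = residues n x (a # t)"
proof -
  have "offsets (t @ [a]) = insert (sum_list t + length t) (offsets t)"
    by (simp add: offsets_def lessThan_Suc offset_length offset_def)
  moreover have "offsets (a # t) = insert 0 ((+) (Suc a) ` offsets t)"
    by (simp add: offsets_def lessThan_Suc_eq_insert_0 image_image offset_Cons_Suc)
  moreover have "x + Suc a + (sum_list t + length t) = x + n"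
    using assms by simp
  then have "(x + Suc a + (sum_list t + length t)) mod n = x mod n"
    by (simp only: mod_add_self2)
  ultimately show ?thesis
    unfolding residues_def by (simp add: image_image add_ac)
qed

lemma residues_rotate:
  assumes "sum_list t + length t = n" and "j < length t"
  shows "residues n (x + offset t j) (rotate j t) = residues n x t"
  using assms(2)
proof (induction j)
  case 0
  then show ?case by simp
next
  case (Suc j)
  then have j: "j < length t" by simp
  then obtain c r where r: "rotate j t = c # r"
    by (cases "rotate j t") auto
  have "rotate j t ! 0 = t ! ((j + 0) mod length t)"
    using j by (intro nth_rotate) linarith
  then have c: "c = t ! j"
    using j r by simp
  have "sum_list (c # r) + length (c # r) = n"
    using assms(1) r sum_list_rotate[of j t] length_rotate[of j t] by simp
  then have "residues n (x + offset t j + Suc c) (r @ [c]) = residues n (x + offset t j) (c # r)"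
    by (rule residues_rotate1)
  moreover have "x + offset t (Suc j) = x + offset t j + Suc c"
    using offset_Suc[OF j] c by simp
  ultimately show ?case
    using Suc.IH j r by (simp add: rotate_Suc ac_simps)
qed

lemma image_modrep_eq_iff:
  assumes "0 < n"
  shows "modrep n ` A = modrep n ` B \<longleftrightarrow> (\<lambda>a. a mod n) ` A = (\<lambda>a. a mod n) ` B"
proof -
  define lift where "lift a = (if a = 0 then n else a)" for a
  have "modrep n = lift \<circ> (\<lambda>a. a mod n)"
    by (simp add: fun_eq_iff modrep_def lift_def)
  then have "modrep n ` C = lift ` (\<lambda>a. a mod n) ` C" for C
    by (simp add: image_comp)
  moreover have "inj_on lift {..<n}"
    by (rule inj_onI) (auto simp: lift_def split: if_splits)
  moreover have "(\<lambda>a. a mod n) ` C \<subseteq> {..<n}" for C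
    using assms by auto
  ultimately show ?thesis
    by (simp add: inj_on_image_eq_iff)
qed

lemma coalition_eq_image_offsets:
  assumes "x \<in> {1..n}" and "t \<noteq> []"
  shows "coalition n x t = modrep n ` (+) x ` offsets t"
proof -
  have "{modrep n (x + phi t i) | i. 2 \<le> i \<and> i \<le> length t}
      = (\<lambda>i. modrep n (x + phi t i)) ` {2..length t}"
    by auto
  also have "{2..length t} = Suc ` {1..<length t}"
    by (simp add: image_Suc_atLeastLessThan atLeastLessThanSuc_atLeastAtMost)
  also have "(\<lambda>i. modrep n (x + phi t i)) ` Suc ` {1..<length t}
      = (\<lambda>j. modrep n (x + offset t j)) ` {1..<length t}"
    unfolding image_image by (rule image_cong) (simp_all add: phi_Suc)
  finally have "coalition n x t = insert x ((\<lambda>j. modrep n (x + offset t j)) ` {1..<length t})"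
    by (simp add: coalition_def)
  moreover have "{..<length t} = insert 0 {1..<length t}"
    using assms(2) by auto
  moreover have "modrep n x = x"
    using assms(1) by (cases "x = n") (auto simp: modrep_def)
  ultimately show ?thesis
    by (simp add: offsets_def image_image)
qed

lemma coalition_eq_iff_residues_eq:
  assumes "x \<in> {1..n}" "y \<in> {1..n}" "t \<noteq> []" "u \<noteq> []"
  shows "coalition n x t = coalition n y u \<longleftrightarrow> residues n x t = residues n y u"
proof -
  have "0 < n"
    using assms(1) by simp
  then show ?thesis
    unfolding coalition_eq_image_offsets[OF assms(1,3)] coalition_eq_image_offsets[OF assms(2,4)]
      image_modrep_eq_iff[OF \<open>0 < n\<close>]
    by (simp add: residues_def image_image)
qed

lemma residues_eq_imp_rotate:
  assumes "sum_list t + length t = n" and "sum_list u + length u = n" and "u \<noteq> []"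
    and "residues n x t = residues n y u"
  obtains k where "k < length t" and "rotate k t = u"
proof -
  have "y mod n \<in> residues n x t"
    using assms(4) zero_in_offsets[OF assms(3)] by (force simp: residues_def)
  then obtain k where k: "k < length t" and yk: "y mod n = (x + offset t k) mod n"
    by (auto simp: residues_def offsets_def)
  have "sum_list (rotate k t) + length (rotate k t) = n"
    using assms(1) by (simp add: sum_list_rotate)
  moreover have "residues n (x + offset t k) (rotate k t) = residues n (x + offset t k) u"
    using residues_rotate[OF assms(1) k] assms(4) residues_mod[OF yk] by simp
  ultimately have "rotate k t = u"
    using assms(2) residues_inj by blast
  with k show thesis ..
qed

theorem lemma5:
  fixes n :: nat and t u :: "nat list"
  assumes "is_IA n t" and "is_IA n u" and "\<not> IA_equiv t u"
  shows "{coalition n i t | i. i \<in> {1..n}} \<inter> {coalition n i u | i. i \<in> {1..n}} = {}"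
proof (rule ccontr)
  assume "\<not> ?thesis"
  then obtain x y where "x \<in> {1..n}" and "y \<in> {1..n}"
    and "coalition n x t = coalition n y u" by blast
  moreover have t: "t \<noteq> []" "sum_list t + length t = n" and u: "u \<noteq> []" "sum_list u + length u = n"
    using assms(1,2) by (auto simp: is_IA_def)
  ultimately have "residues n x t = residues n y u"
    by (simp add: coalition_eq_iff_residues_eq)
  then obtain k where "k < length t" and "rotate k t = u"
    using residues_eq_imp_rotate t(2) u by blast
  then have "IA_equiv t u"
    unfolding IA_equiv_def by (intro conjI exI[of _ k]) (auto simp: rotate_drop_take)
  with assms(3) show False ..
qed

end
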